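(* For all positive integers $n$ and non-negative integers $k$, $$\det_{0\le i,j\le n-1}\Big(\sum_{l=0}^k\binom{i+j}{\lfloor\frac12(i+j+1-k)\rfloor+l}\Big)= \begin{cases}(-1)^{n_1\binom{k+1}2}, & n=(k+1)n_1,\\ (-1)^{n_1\binom{k+1}2}, & n=(k+1)n_1+1,\\ 0, & n\not\equiv0,1\pmod{k+1},\end{cases}$$ where $n_1$ is a non-negative integer and, when $k=0$ and both of the first two cases apply, the first one is meant.
   Context: Binomial coefficients $\binom ab$ (with $a\ge0$) are $0$ if $b<0$ or $b>a$. *)

theory Defs
  imports "Jordan_Normal_Form.Determinant"
begin

definition binom_int :: "nat \<Rightarrow> int \<Rightarrow> int" where
  "binom_int a b = (if b < 0 then 0 else int (a choose nat b))"

end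

theory Submission
  imports Defs "HOL-Library.Poly_Mapping"
begin

text \<open>
  Twice the \<open>(i, j)\<close> entry of the Hankel matrix is the constant term of \<open>Y^(i+j) w\<^sub>k\<close>, where
  \<open>Y = z^2 + z^-2\<close> and \<open>w\<^sub>k = (z + 1/z)^2 (z^(2k) + z^(2k-4) + \<dots> + z^(-2k))\<close> are Laurent
  polynomials in \<open>z\<close>. So it is a Gram matrix of the powers of \<open>Y\<close>, and its determinant does not
  change when \<open>Y^i\<close> is replaced by any polynomial in \<open>Y\<close> that is monic of degree \<open>i\<close>.
  Taking for the columns the Chebyshev-like polynomials \<open>V\<^sub>j\<close> with
  \<open>(z + 1/z) V\<^sub>j = z^(2j+1) + z^(-2j-1)\<close>, and for the rows the differences \<open>V\<^sub>i - V\<^sub>i\<^sub>-\<^sub>2\<close>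
  made periodic modulo \<open>2k + 2\<close>, everything multiplies out: the new matrix has entries in
  \<open>{-1, 0, 1}\<close>, at most two nonzero ones per row, and after moving the first \<open>n - k - 1\<close> rows and
  columns out of the way its determinant is that of a \<open>(k + 1) \<times> (k + 1)\<close> matrix which is
  either singular or a signed permutation matrix, according to \<open>n\<close> modulo \<open>2k + 2\<close>.
\<close>

type_synonym laurent = "int \<Rightarrow>\<^sub>0 int"

abbreviation lcoeff :: "laurent \<Rightarrow> int \<Rightarrow> int" where
  "lcoeff \<equiv> Poly_Mapping.lookup"

definition lmono :: "int \<Rightarrow> laurent" where
  "lmono a = Poly_Mapping.single a 1"

lemma lookup_mult_lmono: "lcoeff (F * lmono a) x = lcoeff F (x - a)"
  unfolding lmono_def
proof (transfer fixing: a x)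
  fix f :: "int \<Rightarrow> int"
  have shift: "Sum_any (\<lambda>b. if x = c + b then if a = b then 1 else 0 else (0::int))
      = (if c = x - a then 1 else 0)" for c
  proof -
    have "Sum_any (\<lambda>b. if x = c + b then if a = b then 1 else 0 else (0::int))
        = Sum_any (\<lambda>b. if b = a then (if x = c + b then 1 else 0) else (0::int))"
      by (rule Sum_any.cong) auto
    then show ?thesis by auto
  qed
  have "Sum_any (\<lambda>c. f c * Sum_any (\<lambda>b. if x = c + b then if a = b then 1 else 0 else 0))
      = Sum_any (\<lambda>c. if c = x - a then f c else 0)"
    by (rule Sum_any.cong) (simp add: shift)
  also have "\<dots> = f (x - a)" by simp
  finally show "prod_fun f (\<lambda>b. 1 when a = b) x = f (x - a)"
    unfolding prod_fun_def by (simp add: when_def)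
qed

lemma lookup_of_int_mult: "lcoeff (of_int c * F) x = c * lcoeff F x"
proof -
  have "(of_int c :: laurent) = Poly_Mapping.single 0 c"
    by (metis single_of_int of_int_eq_id id_apply)
  then have "of_int c * F = Poly_Mapping.map ((*) c) F"
    by (simp add: mult_map_scale_conv_mult)
  then show ?thesis by (simp add: Poly_Mapping.map.rep_eq when_def)
qed

lemma lookup_of_nat_mult: "lcoeff (of_nat c * F) x = int c * lcoeff F x"
  using lookup_of_int_mult [of "int c" F x] by simp

lemma lookup_lmono: "lcoeff (lmono a) x = (if a = x then 1 else 0)"
  unfolding lmono_def by (simp add: lookup_single when_def)

lemma lmono_mult: "lmono a * lmono b = lmono (a + b)"
  unfolding lmono_def by (simp add: mult_single)

lemma lmono_0: "lmono 0 = 1"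
  unfolding lmono_def by simp

lemma lmono_pow: "lmono a ^ r = lmono (int r * a)"
  by (induction r) (auto simp: lmono_0 lmono_mult algebra_simps)

definition lsym :: "int \<Rightarrow> laurent" where
  "lsym a = lmono a + lmono (- a)"

definition lskew :: "int \<Rightarrow> laurent" where
  "lskew a = lmono a - lmono (- a)"

lemma lsym_uminus: "lsym (- a) = lsym a"
  unfolding lsym_def by simp

lemma lsym_mult: "lsym a * lsym b = lsym (a + b) + lsym (b - a)"
  unfolding lsym_def by (simp add: algebra_simps lmono_mult)

lemma lskew_mult: "lskew a * lskew b = lsym (a + b) - lsym (a - b)"
  unfolding lsym_def lskew_def by (simp add: algebra_simps lmono_mult)

definition yvar :: laurent where
  "yvar = lsym 2"

lemma lookup_yvar_pow:
  "lcoeff (yvar ^ m) x = (\<Sum>r\<le>m. if 4 * int r - 2 * int m = x then int (m choose r) else 0)"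
proof -
  have "yvar ^ m = (\<Sum>r\<le>m. of_nat (m choose r) * lmono 2 ^ r * lmono (- 2) ^ (m - r))"
    unfolding yvar_def lsym_def by (rule binomial_ring)
  also have "\<dots> = (\<Sum>r\<le>m. of_nat (m choose r) * lmono (4 * int r - 2 * int m))"
  proof (rule sum.cong [OF refl])
    fix r assume "r \<in> {..m}"
    then have "int (m - r) = int m - int r" by auto
    then have "lmono 2 ^ r * lmono (- 2) ^ (m - r) = lmono (4 * int r - 2 * int m)"
      by (simp add: lmono_pow lmono_mult algebra_simps)
    then show "of_nat (m choose r) * lmono 2 ^ r * lmono (- 2) ^ (m - r)
        = of_nat (m choose r) * lmono (4 * int r - 2 * int m)"
      by (simp add: mult.assoc)
  qed
  finally show ?thesis
    by (auto simp: lookup_sum lookup_of_nat_mult lookup_lmono intro!: sum.cong)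
qed

lemma lookup_yvar_pow_uminus: "lcoeff (yvar ^ m) (- x :: int) = lcoeff (yvar ^ m) x"
proof -
  have "lcoeff (yvar ^ m) x
      = (\<Sum>r = 0..m. if 4 * int r - 2 * int m = x then int (m choose r) else 0)"
    by (simp add: lookup_yvar_pow atLeast0AtMost)
  also have "\<dots> = (\<Sum>r = 0..m. if 4 * int (m - r) - 2 * int m = x
                                 then int (m choose (m - r)) else 0)"
    by (rule sum.reindex_bij_witness [where i = "\<lambda>r. m - r" and j = "\<lambda>r. m - r"]) auto
  also have "\<dots> = (\<Sum>r = 0..m. if 4 * int r - 2 * int m = - x then int (m choose r) else 0)"
    by (rule sum.cong) (auto simp: of_nat_diff binomial_symmetric [symmetric])
  finally show ?thesis
    by (simp add: lookup_yvar_pow atLeast0AtMost)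
qed

lemma lookup_yvar_pow_even:
  "lcoeff (yvar ^ m) (2 * s) = (if even (int m + s) then binom_int m ((int m + s) div 2) else 0)"
proof -
  have coeff: "lcoeff (yvar ^ m) (2 * s)
      = (\<Sum>r\<le>m. if 4 * int r - 2 * int m = 2 * s then int (m choose r) else 0)"
    by (rule lookup_yvar_pow)
  show ?thesis
  proof (cases "even (int m + s)")
    case False
    have "4 * int r - 2 * int m \<noteq> 2 * s" for r
    proof
      assume "4 * int r - 2 * int m = 2 * s"
      then have "int m + s = 2 * int r" by linarith
      with False show False by simp
    qed
    then show ?thesis using False coeff by simp
  next
    case True
    define t where "t = (int m + s) div 2"
    have "int m + s = 2 * t" using True t_def by auto
    then have "(4 * int r - 2 * int m = 2 * s) \<longleftrightarrow> int r = t" for r by linarith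
    then have "lcoeff (yvar ^ m) (2 * s) = (\<Sum>r\<le>m. if int r = t then int (m choose r) else 0)"
      using coeff by simp
    also have "\<dots> = binom_int m t"
    proof (cases "t < 0")
      case True then show ?thesis unfolding binom_int_def by (auto intro!: sum.neutral)
    next
      case False
      then have "(\<Sum>r\<le>m. if int r = t then int (m choose r) else 0)
          = (\<Sum>r\<le>m. if r = nat t then int (m choose r) else 0)"
        by (intro sum.cong) auto
      with False show ?thesis unfolding binom_int_def by auto
    qed
    finally show ?thesis using True t_def by simp
  qed
qed

lemma lookup_yvar_pow_adjacent:
  "lcoeff (yvar ^ m) (2 * s) + lcoeff (yvar ^ m) (2 * s - 2) = binom_int m ((int m + s) div 2)"
proof -
  have below: "lcoeff (yvar ^ m) (2 * s - 2)
      = (if even (int m + (s - 1)) then binom_int m ((int m + (s - 1)) div 2) else 0)"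
    using lookup_yvar_pow_even [of m "s - 1"] by (simp add: right_diff_distrib)
  show ?thesis
  proof (cases "even (int m + s)")
    case True
    then have "odd (int m + (s - 1))" by presburger
    with True show ?thesis by (simp add: below lookup_yvar_pow_even)
  next
    case False
    then have "even (int m + (s - 1))" "(int m + (s - 1)) div 2 = (int m + s) div 2"
      by presburger+
    with False show ?thesis by (simp add: below lookup_yvar_pow_even)
  qed
qed

fun chebV :: "nat \<Rightarrow> laurent" where
  "chebV 0 = 1"
| "chebV (Suc 0) = yvar - 1"
| "chebV (Suc (Suc j)) = yvar * chebV (Suc j) - chebV j"

lemma lsym1_mult_chebV: "lsym 1 * chebV j = lsym (2 * int j + 1)"
proof (induction j rule: chebV.induct)
  case 1
  then show ?case by simp
next
  case 2
  have "lsym 1 * chebV (Suc 0) = lsym 1 * lsym 2 - lsym 1"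
    by (simp add: yvar_def algebra_simps)
  also have "\<dots> = lsym 3" by (simp add: lsym_mult)
  finally show ?case by simp
next
  case (3 j)
  have "lsym 1 * chebV (Suc (Suc j)) = lsym 2 * (lsym 1 * chebV (Suc j)) - lsym 1 * chebV j"
    by (simp add: yvar_def algebra_simps)
  also have "\<dots> = lsym 2 * lsym (2 * int j + 3) - lsym (2 * int j + 1)"
    using 3 by (simp add: add.commute add.left_commute)
  also have "\<dots> = lsym (2 * int j + 5)"
    by (simp add: lsym_mult algebra_simps)
  finally show ?case by (simp add: algebra_simps)
qed

text \<open>For \<open>i = 1\<close> the truncated subtraction gives \<open>chebV (i - 2) = chebV 0 = 1\<close>, which is the
  value \<open>V\<^sub>-\<^sub>1\<close> obtained by running the recursion of \<^const>\<open>chebV\<close> backwards.\<close>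

definition chebV_step :: "nat \<Rightarrow> laurent" where
  "chebV_step i = (if i = 0 then 1 else chebV i - chebV (i - 2))"

lemma lsym1_mult_chebV_step:
  assumes "i \<ge> 1"
  shows "lsym 1 * chebV_step i = lskew 2 * lskew (2 * int i - 1)"
proof -
  have "lsym (2 * int (i - 2) + 1) = lsym (3 - 2 * int i)"
  proof (cases "i = 1")
    case False
    with assms have "2 * int (i - 2) + 1 = - (3 - 2 * int i)" by auto
    then show ?thesis by (simp only: lsym_uminus)
  qed simp
  then have "lsym 1 * chebV_step i = lsym (2 * int i + 1) - lsym (3 - 2 * int i)"
    using assms by (simp add: chebV_step_def right_diff_distrib lsym1_mult_chebV)
  also have "\<dots> = lskew 2 * lskew (2 * int i - 1)"
    by (simp add: lskew_mult algebra_simps)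
  finally show ?thesis .
qed

fun geom_sum4 :: "nat \<Rightarrow> laurent" where
  "geom_sum4 0 = 1"
| "geom_sum4 (Suc k) = lmono (2 * int (Suc k)) + lmono (- 2) * geom_sum4 k"

lemma lskew2_mult_geom_sum4: "lskew 2 * geom_sum4 k = lskew (2 * int k + 2)"
proof (induction k)
  case 0
  then show ?case by simp
next
  case (Suc k)
  have "lskew 2 * geom_sum4 (Suc k) = lskew 2 * lmono (2 * int (Suc k)) + lmono (- 2) * (lskew 2 * geom_sum4 k)"
    by (simp add: algebra_simps)
  also have "\<dots> = lskew (2 * int (Suc k) + 2)"
    unfolding Suc by (simp add: lskew_def algebra_simps lmono_mult)
  finally show ?case .
qed

lemma one_plus_lmono2_mult_geom_sum4:
  "(1 + lmono 2) * geom_sum4 k = (\<Sum>t<2 * k + 2. lmono (2 * int t - 2 * int k))"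
proof (induction k)
  case 0
  then show ?case by (simp add: numeral_2_eq_2 lmono_0)
next
  case (Suc k)
  have "(1 + lmono 2) * geom_sum4 (Suc k)
      = lmono (2 * int k + 2) + lmono (2 * int k + 4) + lmono (- 2) * ((1 + lmono 2) * geom_sum4 k)"
    by (simp add: algebra_simps lmono_mult)
  also have "lmono (- 2) * ((1 + lmono 2) * geom_sum4 k)
      = (\<Sum>t<2 * k + 2. lmono (2 * int t - 2 * int (Suc k)))"
    unfolding Suc sum_distrib_left by (rule sum.cong) (simp_all add: lmono_mult algebra_simps)
  finally show ?case by (simp add: algebra_simps)
qed

definition weight :: "nat \<Rightarrow> laurent" where
  "weight k = lsym 1 ^ 2 * geom_sum4 k"

definition moment :: "nat \<Rightarrow> laurent \<Rightarrow> int" where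
  "moment k F = lcoeff (F * weight k) 0"

lemma moment_add: "moment k (F + G) = moment k F + moment k G"
  unfolding moment_def by (simp add: distrib_right lookup_add)

lemma moment_sum_scaled:
  "moment k ((\<Sum>s\<in>A. of_int (c s) * X s) * G) = (\<Sum>s\<in>A. c s * moment k (X s * G))"
  unfolding moment_def
  by (simp add: sum_distrib_right lookup_sum mult.assoc lookup_of_int_mult)

lemma moment_eq_coeff_sum:
  "moment k F = (\<Sum>t<2 * k + 2. lcoeff F (2 * int k - 2 * int t))
              + (\<Sum>t<2 * k + 2. lcoeff F (2 * int k + 2 - 2 * int t))"
proof -
  define S where "S = (\<Sum>t<2 * k + 2. lmono (2 * int t - 2 * int k))"
  have "lsym 1 ^ 2 = (1 + lmono (- 2)) * (1 + lmono 2)"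
    by (simp add: lsym_def power2_eq_square algebra_simps lmono_mult lmono_0)
  then have "weight k = (1 + lmono (- 2)) * ((1 + lmono 2) * geom_sum4 k)"
    unfolding weight_def by (simp only: mult.assoc)
  then have "weight k = (1 + lmono (- 2)) * S"
    by (simp only: S_def one_plus_lmono2_mult_geom_sum4)
  then have "F * weight k = F * S + (F * lmono (- 2)) * S"
    by (simp add: algebra_simps)
  then have "moment k F = (\<Sum>t<2 * k + 2. lcoeff (F * lmono (2 * int t - 2 * int k)) 0)
      + (\<Sum>t<2 * k + 2. lcoeff (F * lmono (- 2) * lmono (2 * int t - 2 * int k)) 0)"
    unfolding moment_def S_def by (simp only: lookup_add sum_distrib_left lookup_sum)
  then show ?thesis by (simp add: lookup_mult_lmono lmono_mult algebra_simps)
qed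

definition binom_window :: "nat \<Rightarrow> nat \<Rightarrow> int" where
  "binom_window k m = (\<Sum>l = 0..k. binom_int m ((int m + 1 - int k) div 2 + int l))"

lemma sum_lessThan_double: "(\<Sum>t<2 * (n::nat). g t) = (\<Sum>u<n. g (2 * u) + g (2 * u + 1))"
  by (induction n) (simp_all add: algebra_simps)

lemma sum_lookup_yvar_pow_reflect:
  "(\<Sum>t<2 * k + 2. lcoeff (yvar ^ m) (2 * (int k - int t)))
   = (\<Sum>t<2 * k + 2. lcoeff (yvar ^ m) (2 * (int k + 1 - int t)))"
proof -
  have "(\<Sum>t<2 * k + 2. lcoeff (yvar ^ m) (2 * (int k + 1 - int t)))
      = (\<Sum>t<2 * k + 2. lcoeff (yvar ^ m) (2 * (int k + 1 - int (2 * k + 2 - Suc t))))"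
    by (rule sum.nat_diff_reindex [symmetric])
  also have "\<dots> = (\<Sum>t<2 * k + 2. lcoeff (yvar ^ m) (2 * (int k - int t)))"
  proof (rule sum.cong [OF refl])
    fix t assume "t \<in> {..<2 * k + 2}"
    then have "2 * (int k + 1 - int (2 * k + 2 - Suc t)) = - (2 * (int k - int t))" by auto
    then show "lcoeff (yvar ^ m) (2 * (int k + 1 - int (2 * k + 2 - Suc t)))
        = lcoeff (yvar ^ m) (2 * (int k - int t))"
      by (metis lookup_yvar_pow_uminus)
  qed
  finally show ?thesis by simp
qed

lemma sum_lookup_yvar_pow_pairs:
  "(\<Sum>t<2 * k + 2. lcoeff (yvar ^ m) (2 * (int k + 1 - int t)))
   = (\<Sum>u<k + 1. binom_int m ((int m + int k + 1) div 2 - int u))"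
proof -
  let ?c = "\<lambda>s. lcoeff (yvar ^ m) (2 * s)"
  have "(\<Sum>t<2 * k + 2. ?c (int k + 1 - int t))
      = (\<Sum>u<k + 1. ?c (int k + 1 - 2 * int u) + lcoeff (yvar ^ m) (2 * (int k + 1 - 2 * int u) - 2))"
    using sum_lessThan_double [of "\<lambda>t. ?c (int k + 1 - int t)" "k + 1"] by (simp add: algebra_simps)
  also have "\<dots> = (\<Sum>u<k + 1. binom_int m ((int m + int k + 1) div 2 - int u))"
  proof (rule sum.cong [OF refl])
    fix u
    have "(int m + (int k + 1 - 2 * int u)) div 2 = (int m + int k + 1) div 2 - int u" by simp
    then show "?c (int k + 1 - 2 * int u) + lcoeff (yvar ^ m) (2 * (int k + 1 - 2 * int u) - 2)
        = binom_int m ((int m + int k + 1) div 2 - int u)"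
      by (simp only: lookup_yvar_pow_adjacent)
  qed
  finally show ?thesis .
qed

lemma binom_window_reversed:
  "binom_window k m = (\<Sum>u<k + 1. binom_int m ((int m + int k + 1) div 2 - int u))"
proof -
  have centre: "(int m + int k + 1) div 2 = (int m + 1 - int k) div 2 + int k"
  proof -
    have "int m + int k + 1 = (int m + 1 - int k) + 2 * int k" by simp
    then show ?thesis by simp
  qed
  have "(\<Sum>u<k + 1. binom_int m ((int m + int k + 1) div 2 - int u))
      = (\<Sum>u<k + 1. binom_int m ((int m + int k + 1) div 2 - int (k + 1 - Suc u)))"
    by (rule sum.nat_diff_reindex [symmetric])
  also have "\<dots> = (\<Sum>l<k + 1. binom_int m ((int m + 1 - int k) div 2 + int l))"
    by (rule sum.cong) (auto simp: centre of_nat_diff)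
  finally show ?thesis
    unfolding binom_window_def by (simp add: atLeast0AtMost lessThan_Suc_atMost)
qed

lemma moment_yvar_pow: "moment k (yvar ^ m) = 2 * binom_window k m"
proof -
  have "moment k (yvar ^ m) = (\<Sum>t<2 * k + 2. lcoeff (yvar ^ m) (2 * (int k - int t)))
      + (\<Sum>t<2 * k + 2. lcoeff (yvar ^ m) (2 * (int k + 1 - int t)))"
    unfolding moment_eq_coeff_sum by (simp add: algebra_simps)
  \<comment> \<open>the two sums agree under \<open>t \<mapsto> 2k + 1 - t\<close>, by the symmetry \<open>z \<mapsto> z\<^sup>-\<^sup>1\<close> of \<open>Y\<close>\<close>
  also have "(\<Sum>t<2 * k + 2. lcoeff (yvar ^ m) (2 * (int k - int t)))
      = (\<Sum>t<2 * k + 2. lcoeff (yvar ^ m) (2 * (int k + 1 - int t)))"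
    by (rule sum_lookup_yvar_pow_reflect)
  also have "(\<Sum>t<2 * k + 2. lcoeff (yvar ^ m) (2 * (int k + 1 - int t))) = binom_window k m"
    unfolding binom_window_reversed by (rule sum_lookup_yvar_pow_pairs)
  finally show ?thesis by simp
qed

lemma sum_lessThan_indicator_int:
  "(\<Sum>t<N. if int t = c then 1 else 0 :: int) = (if 0 \<le> c \<and> c < int N then 1 else 0)"
proof (cases "0 \<le> c")
  case True
  then have "(\<Sum>t<N. if int t = c then 1 else 0 :: int) = (\<Sum>t<N. if t = nat c then 1 else 0)"
    by (intro sum.cong) auto
  with True show ?thesis by auto
qed (auto intro!: sum.neutral)

lemma moment_chebV: "moment k (chebV j) = (if j \<le> k then 2 else 0)"
proof -
  have "lsym 1 = lmono (- 1) * (1 + lmono 2)"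
    by (simp add: lsym_def algebra_simps lmono_mult)
  then have "chebV j * weight k = (lsym 1 * chebV j) * (lmono (- 1) * (1 + lmono 2)) * geom_sum4 k"
    by (simp add: weight_def power2_eq_square mult_ac)
  also have "\<dots> = lsym (2 * int j + 1) * lmono (- 1) * ((1 + lmono 2) * geom_sum4 k)"
    unfolding lsym1_mult_chebV by (simp add: mult_ac)
  also have "\<dots> = (\<Sum>t<2 * k + 2. lsym (2 * int j + 1) * lmono (2 * int t - 2 * int k - 1))"
    unfolding one_plus_lmono2_mult_geom_sum4 sum_distrib_left
    by (rule sum.cong) (simp_all add: mult.assoc lmono_mult algebra_simps)
  finally have "moment k (chebV j)
      = (\<Sum>t<2 * k + 2. lcoeff (lsym (2 * int j + 1) * lmono (2 * int t - 2 * int k - 1)) 0)"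
    unfolding moment_def by (simp only: lookup_sum)
  also have "\<dots> = (\<Sum>t<2 * k + 2. lcoeff (lsym (2 * int j + 1)) (2 * int k + 1 - 2 * int t))"
    by (rule sum.cong) (simp_all add: lookup_mult_lmono algebra_simps)
  also have "\<dots> = (\<Sum>t<2 * k + 2. (if int t = int k - int j then 1 else 0)
                                 + (if int t = int k + int j + 1 then 1 else 0))"
    by (rule sum.cong) (auto simp: lsym_def lookup_add lookup_lmono)
  also have "\<dots> = (if j \<le> k then 2 else 0)"
    by (simp add: sum.distrib sum_lessThan_indicator_int)
  finally show ?thesis .
qed

lemma moment_chebV_step_chebV:
  assumes "i \<ge> 1"
  shows "moment k (chebV_step i * chebV j) = 2 * ((if j = i + k then 1 else 0)
    - (if i + j = k + 1 then 1 else 0) - (if i = j + k + 2 then 1 else 0))"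
proof -
  have "chebV_step i * chebV j * weight k
      = (lsym 1 * chebV_step i) * (lsym 1 * chebV j) * geom_sum4 k"
    by (simp add: weight_def power2_eq_square mult_ac)
  also have "\<dots> = (lskew 2 * lskew (2 * int i - 1)) * lsym (2 * int j + 1) * geom_sum4 k"
    by (simp only: lsym1_mult_chebV_step [OF assms] lsym1_mult_chebV)
  also have "\<dots> = lskew (2 * int i - 1) * lsym (2 * int j + 1) * (lskew 2 * geom_sum4 k)"
    by (simp add: mult_ac)
  also have "\<dots> = lskew (2 * int i - 1) * lsym (2 * int j + 1) * lskew (2 * int k + 2)"
    by (simp only: lskew2_mult_geom_sum4)
  finally have product: "chebV_step i * chebV j * weight k
      = lskew (2 * int i - 1) * lsym (2 * int j + 1) * lskew (2 * int k + 2)" .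
  show ?thesis
    unfolding moment_def product
    by (simp add: lskew_def lsym_def algebra_simps lmono_mult lookup_add lookup_minus lookup_lmono)
qed

text \<open>In the Gram matrix against \<^const>\<open>chebV\<close>, adding the row of index \<open>i - (2k + 2)\<close> cancels the
  entry of \<open>chebV_step i\<close> in column \<open>i - k - 2\<close>; what remains are the entries in columns \<open>i + k\<close>
  and \<open>fold_index k i \<le> k\<close>, the reflection of \<open>i - 1\<close> modulo \<open>2k + 2\<close> into \<open>{0..k}\<close>.\<close>

function row_poly :: "nat \<Rightarrow> nat \<Rightarrow> laurent" where
  "row_poly k i = chebV_step i + (if 2 * k + 2 < i then row_poly k (i - (2 * k + 2)) else 0)"
  by pat_completeness auto
termination by (relation "measure snd") auto

declare row_poly.simps [simp del]

definition fold_index :: "nat \<Rightarrow> nat \<Rightarrow> nat" where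
  "fold_index k i = (let r = (i - 1) mod (2 * k + 2) in if r \<le> k then k - r else r - k - 1)"

lemma fold_index_le: "fold_index k i \<le> k"
proof -
  define r where "r = (i - 1) mod (2 * k + 2)"
  have "r < 2 * k + 2" unfolding r_def by simp
  then show ?thesis unfolding fold_index_def Let_def r_def [symmetric] by auto
qed

lemma moment_row_poly_chebV:
  "i \<ge> 1 \<Longrightarrow> moment k (row_poly k i * chebV j)
    = 2 * ((if j = i + k then 1 else 0) - (if j = fold_index k i then 1 else 0))"
proof (induction i rule: less_induct)
  case (less i)
  show ?case
  proof (cases "2 * k + 2 < i")
    case False
    then have "(i - 1) mod (2 * k + 2) = i - 1" by simp
    with less.prems have "fold_index k i = (if i - 1 \<le> k then k + 1 - i else i - k - 2)"
      unfolding fold_index_def Let_def by auto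
    moreover have "row_poly k i = chebV_step i" using False by (subst row_poly.simps) simp
    ultimately show ?thesis
      using False less.prems by (auto simp: moment_chebV_step_chebV)
  next
    case True
    let ?i = "i - (2 * k + 2)"
    have "i - 1 = (?i - 1) + (2 * k + 2)" using True by simp
    then have "fold_index k ?i = fold_index k i"
      unfolding fold_index_def by (metis mod_add_self2)
    moreover have "row_poly k i = chebV_step i + row_poly k ?i"
      using True by (subst row_poly.simps) simp
    then have "moment k (row_poly k i * chebV j)
        = moment k (chebV_step i * chebV j) + moment k (row_poly k ?i * chebV j)"
      by (simp add: distrib_right moment_add)
    ultimately show ?thesis
      using True less.IH [of ?i] less.prems by (auto simp: moment_chebV_step_chebV)
  qed
qed

lemma moment_row_poly0_chebV: "moment k (row_poly k 0 * chebV j) = (if j \<le> k then 2 else 0)"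
  by (subst row_poly.simps) (simp add: chebV_step_def moment_chebV)

definition ypoly_below :: "nat \<Rightarrow> laurent \<Rightarrow> bool" where
  "ypoly_below t F \<longleftrightarrow> (\<exists>\<beta>. F = (\<Sum>s<t. of_int (\<beta> s) * yvar ^ s))"

definition ymonic :: "nat \<Rightarrow> laurent \<Rightarrow> bool" where
  "ymonic i F \<longleftrightarrow> ypoly_below i (F - yvar ^ i)"

lemma ypoly_below_0: "ypoly_below t 0"
  unfolding ypoly_below_def by (rule exI [of _ "\<lambda>_. 0"]) simp

lemma ypoly_below_diff:
  assumes "ypoly_below t F" "ypoly_below t G"
  shows "ypoly_below t (F - G)"
proof -
  obtain \<beta> \<gamma> where "F = (\<Sum>s<t. of_int (\<beta> s) * yvar ^ s)" "G = (\<Sum>s<t. of_int (\<gamma> s) * yvar ^ s)"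
    using assms unfolding ypoly_below_def by blast
  then have "F - G = (\<Sum>s<t. of_int (\<beta> s - \<gamma> s) * yvar ^ s)"
    by (simp add: sum_subtractf left_diff_distrib)
  then show ?thesis unfolding ypoly_below_def by (intro exI [of _ "\<lambda>s. \<beta> s - \<gamma> s"])
qed

lemma ypoly_below_add:
  assumes "ypoly_below t F" "ypoly_below t G"
  shows "ypoly_below t (F + G)"
  using ypoly_below_diff [OF assms(1) ypoly_below_diff [OF ypoly_below_0 assms(2)]] by simp

lemma ypoly_below_mono:
  assumes "ypoly_below s F" "s \<le> t"
  shows "ypoly_below t F"
proof -
  obtain \<beta> where \<beta>: "F = (\<Sum>r<s. of_int (\<beta> r) * yvar ^ r)"
    using assms(1) unfolding ypoly_below_def by blast
  have "(\<Sum>r<t. of_int (if r < s then \<beta> r else 0) * yvar ^ r)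
      = (\<Sum>r<s. of_int (if r < s then \<beta> r else 0) * yvar ^ r)"
    by (rule sum.mono_neutral_right) (use assms(2) in auto)
  also have "\<dots> = F" unfolding \<beta> by (rule sum.cong) auto
  finally show ?thesis unfolding ypoly_below_def by metis
qed

lemma ypoly_below_mult_yvar:
  assumes "ypoly_below t F"
  shows "ypoly_below (Suc t) (yvar * F)"
proof -
  obtain \<beta> where \<beta>: "F = (\<Sum>r<t. of_int (\<beta> r) * yvar ^ r)"
    using assms unfolding ypoly_below_def by blast
  define \<gamma> where "\<gamma> r = (if r = 0 then 0 else \<beta> (r - 1))" for r
  have "(\<Sum>r<Suc t. of_int (\<gamma> r) * yvar ^ r) = (\<Sum>r<t. of_int (\<gamma> (Suc r)) * yvar ^ Suc r)"
    unfolding sum.lessThan_Suc_shift by (simp add: \<gamma>_def)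
  also have "\<dots> = yvar * F"
    unfolding \<beta> sum_distrib_left by (rule sum.cong) (auto simp: \<gamma>_def mult_ac)
  finally show ?thesis unfolding ypoly_below_def by metis
qed

lemma ypoly_below_yvar_pow:
  assumes "i < t"
  shows "ypoly_below t (yvar ^ i)"
proof -
  have "(\<Sum>r<t. of_int (if r = i then 1 else 0) * yvar ^ r) = (\<Sum>r<t. if r = i then yvar ^ r else 0)"
    by (rule sum.cong) auto
  also have "\<dots> = yvar ^ i" using assms by (simp add: sum.delta)
  finally show ?thesis unfolding ypoly_below_def by metis
qed

lemma ymonic_imp_ypoly_below: "ymonic i F \<Longrightarrow> ypoly_below (Suc i) F"
  unfolding ymonic_def
  using ypoly_below_add [OF ypoly_below_mono ypoly_below_yvar_pow, of i "F - yvar ^ i" "Suc i" i]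
  by simp

lemma ymonic_chebV: "ymonic j (chebV j)"
proof (induction j rule: chebV.induct)
  case 1
  then show ?case by (simp add: ymonic_def ypoly_below_0)
next
  case 2
  then show ?case
    unfolding ymonic_def using ypoly_below_diff [OF ypoly_below_0 ypoly_below_yvar_pow, of 0 1]
    by simp
next
  case (3 j)
  have "chebV (Suc (Suc j)) - yvar ^ Suc (Suc j) = yvar * (chebV (Suc j) - yvar ^ Suc j) - chebV j"
    by (simp add: algebra_simps)
  moreover have "ypoly_below (Suc (Suc j)) (yvar * (chebV (Suc j) - yvar ^ Suc j))"
    using 3(1) unfolding ymonic_def by (rule ypoly_below_mult_yvar)
  moreover have "ypoly_below (Suc (Suc j)) (chebV j)"
    using ypoly_below_mono [OF ymonic_imp_ypoly_below [OF 3(2)]] by simp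
  ultimately show ?case unfolding ymonic_def by (metis ypoly_below_diff)
qed

lemma ymonic_chebV_step: "ymonic i (chebV_step i)"
proof (cases "i = 0")
  case False
  have "chebV_step i - yvar ^ i = (chebV i - yvar ^ i) - chebV (i - 2)"
    using False by (simp add: chebV_step_def)
  moreover have "ypoly_below i (chebV (i - 2))"
    using ypoly_below_mono [OF ymonic_imp_ypoly_below [OF ymonic_chebV]] False by simp
  ultimately show ?thesis
    using ymonic_chebV [of i] unfolding ymonic_def by (metis ypoly_below_diff)
qed (simp add: chebV_step_def ymonic_def ypoly_below_0)

lemma ymonic_row_poly: "ymonic i (row_poly k i)"
proof (induction i rule: less_induct)
  case (less i)
  show ?case
  proof (cases "2 * k + 2 < i")
    case True
    have "row_poly k i - yvar ^ i = (chebV_step i - yvar ^ i) + row_poly k (i - (2 * k + 2))"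
      using True by (subst row_poly.simps) simp
    moreover have "ypoly_below i (row_poly k (i - (2 * k + 2)))"
      using ypoly_below_mono [OF ymonic_imp_ypoly_below [OF less.IH [of "i - (2 * k + 2)"]]] True
      by simp
    ultimately show ?thesis
      using ymonic_chebV_step [of i] unfolding ymonic_def by (metis ypoly_below_add)
  next
    case False
    then have "row_poly k i = chebV_step i" by (subst row_poly.simps) simp
    then show ?thesis using ymonic_chebV_step by simp
  qed
qed

lemma det_moment_gram_ymonic_left:
  fixes b g :: "nat \<Rightarrow> laurent"
  assumes "\<And>i. i < n \<Longrightarrow> ymonic i (b i)"
  shows "det (mat n n (\<lambda>(i, j). moment k (b i * g j)))
       = det (mat n n (\<lambda>(i, j). moment k (yvar ^ i * g j)))"
proof -
  obtain B where B: "\<And>i. i < n \<Longrightarrow> b i - yvar ^ i = (\<Sum>s<i. of_int (B i s) * yvar ^ s)"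
    using assms unfolding ymonic_def ypoly_below_def by metis
  define T where "T = mat n n (\<lambda>(i, s). if s = i then 1 else if s < i then B i s else 0)"
  define G where "G = mat n n (\<lambda>(i, j). moment k (yvar ^ i * g j))"
  have b_row: "b i = (\<Sum>s\<in>{0..<n}. of_int (T $$ (i, s)) * yvar ^ s)" if i: "i < n" for i
  proof -
    have "(\<Sum>s\<in>{0..<n}. of_int (T $$ (i, s)) * yvar ^ s) = (\<Sum>s<Suc i. of_int (T $$ (i, s)) * yvar ^ s)"
      by (rule sum.mono_neutral_right) (use i in \<open>auto simp: T_def\<close>)
    also have "\<dots> = (\<Sum>s<i. of_int (B i s) * yvar ^ s) + yvar ^ i"
      using i by (simp add: T_def)
    finally show ?thesis using B [OF i] by (simp add: algebra_simps)
  qed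
  have "mat n n (\<lambda>(i, j). moment k (b i * g j)) = T * G"
  proof (rule eq_matI)
    fix i j assume "i < dim_row (T * G)" "j < dim_col (T * G)"
    then have ij: "i < n" "j < n" unfolding T_def G_def by auto
    then have "(T * G) $$ (i, j) = (\<Sum>s\<in>{0..<n}. T $$ (i, s) * moment k (yvar ^ s * g j))"
      unfolding G_def by (simp add: scalar_prod_def T_def)
    also have "\<dots> = moment k (b i * g j)"
      unfolding b_row [OF ij(1)] by (rule moment_sum_scaled [symmetric])
    finally show "mat n n (\<lambda>(i, j). moment k (b i * g j)) $$ (i, j) = (T * G) $$ (i, j)"
      using ij by simp
  qed (auto simp: T_def G_def)
  moreover have "det T = 1"
  proof -
    have "det T = prod_list (diag_mat T)"
      by (rule det_lower_triangular [of n]) (auto simp: T_def)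
    also have "diag_mat T = replicate n 1"
      by (rule nth_equalityI) (auto simp: diag_mat_def T_def)
    finally show ?thesis by simp
  qed
  moreover have "det (T * G) = det T * det G"
    by (rule det_mult) (auto simp: T_def G_def)
  ultimately show ?thesis unfolding G_def by simp
qed

lemma det_moment_gram_ymonic:
  fixes b c :: "nat \<Rightarrow> laurent"
  assumes "\<And>i. i < n \<Longrightarrow> ymonic i (b i)" and "\<And>j. j < n \<Longrightarrow> ymonic j (c j)"
  shows "det (mat n n (\<lambda>(i, j). moment k (b i * c j)))
       = det (mat n n (\<lambda>(i, j). moment k (yvar ^ i * yvar ^ j)))"
proof -
  have "det (mat n n (\<lambda>(i, j). moment k (b i * c j)))
      = det (mat n n (\<lambda>(i, j). moment k (yvar ^ i * c j)))"
    using assms(1) by (rule det_moment_gram_ymonic_left)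
  also have "\<dots> = det (mat n n (\<lambda>(i, j). moment k (yvar ^ i * c j)))\<^sup>T"
    by (rule det_transpose [symmetric]) auto
  also have "(mat n n (\<lambda>(i, j). moment k (yvar ^ i * c j)))\<^sup>T
      = mat n n (\<lambda>(i, j). moment k (c i * yvar ^ j))"
    by (rule eq_matI) (auto simp: mult.commute)
  also have "det \<dots> = det (mat n n (\<lambda>(i, j). moment k (yvar ^ i * yvar ^ j)))"
    using assms(2) by (rule det_moment_gram_ymonic_left)
  finally show ?thesis .
qed

definition reduced_mat :: "nat \<Rightarrow> nat \<Rightarrow> int mat" where
  "reduced_mat k n = mat n n (\<lambda>(i, j).
     if i = 0 then (if j \<le> k then 1 else 0)
     else (if j = i + k then 1 else 0) - (if j = fold_index k i then 1 else 0))"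

lemma det_hankel_eq_det_reduced_mat:
  "det (mat n n (\<lambda>(i, j). \<Sum>l = 0..k.
      binom_int (i + j) ((int i + int j + 1 - int k) div 2 + int l)))
   = det (reduced_mat k n)"
proof -
  let ?H = "mat n n (\<lambda>(i, j). \<Sum>l = 0..k. binom_int (i + j) ((int i + int j + 1 - int k) div 2 + int l))"
  have "mat n n (\<lambda>(i, j). moment k (yvar ^ i * yvar ^ j)) = 2 \<cdot>\<^sub>m ?H"
    by (rule eq_matI) (auto simp: power_add [symmetric] moment_yvar_pow binom_window_def)
  moreover have "mat n n (\<lambda>(i, j). moment k (row_poly k i * chebV j)) = 2 \<cdot>\<^sub>m reduced_mat k n"
    by (rule eq_matI) (auto simp: reduced_mat_def moment_row_poly_chebV moment_row_poly0_chebV)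
  ultimately have "det (2 \<cdot>\<^sub>m reduced_mat k n) = det (2 \<cdot>\<^sub>m ?H)"
    using det_moment_gram_ymonic [of n "row_poly k" chebV k] ymonic_row_poly ymonic_chebV by metis
  then show ?thesis by (simp add: reduced_mat_def)
qed

lemma det_single_entry_col:
  fixes A :: "'a :: comm_ring_1 mat"
  assumes A: "A \<in> carrier_mat n n" and i: "i < n" and j: "j < n"
    and zero: "\<And>i'. i' < n \<Longrightarrow> i' \<noteq> i \<Longrightarrow> A $$ (i', j) = 0"
  shows "det A = (- 1) ^ (i + j) * A $$ (i, j) * det (mat_delete A i j)"
proof -
  have "det A = (\<Sum>i'<n. A $$ (i', j) * cofactor A i' j)"
    using A j by (rule laplace_expansion_column)
  also have "\<dots> = A $$ (i, j) * cofactor A i j"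
    using i zero by (subst sum.remove [of _ i]) (auto intro!: sum.neutral)
  finally show ?thesis by (simp add: cofactor_def)
qed

lemma det_exchange_mat:
  "det (mat m m (\<lambda>(i, j). if Suc (i + j) = m then 1 else 0) :: 'a :: comm_ring_1 mat)
   = (- 1) ^ (m choose 2)"
proof (induction m)
  case 0
  then show ?case by (simp add: det_dim_zero numeral_2_eq_2)
next
  case (Suc m)
  let ?J = "\<lambda>m. mat m m (\<lambda>(i, j). if Suc (i + j) = m then 1 else 0) :: 'a mat"
  have "det (?J (Suc m)) = (- 1) ^ m * det (mat_delete (?J (Suc m)) m 0)"
    by (subst det_single_entry_col [of _ "Suc m" m 0]) auto
  also have "mat_delete (?J (Suc m)) m 0 = ?J m"
    by (rule eq_matI) (auto simp: mat_delete_def)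
  finally show ?case
    using Suc by (simp add: numeral_2_eq_2 power_add)
qed

text \<open>Row \<open>0\<close> and the last \<open>k\<close> rows of \<^const>\<open>reduced_mat\<close>, restricted to its first \<open>k + 1\<close>
  columns.\<close>

definition corner_mat :: "nat \<Rightarrow> (nat \<Rightarrow> nat) \<Rightarrow> int mat" where
  "corner_mat k g = mat (Suc k) (Suc k) (\<lambda>(s, j). if s = 0 then 1 else - (if j = g s then 1 else 0))"

lemma det_corner_mat_delete:
  assumes "j \<le> k" and "\<And>s. 1 \<le> s \<Longrightarrow> s \<le> k \<Longrightarrow> g s \<noteq> j"
  shows "det (corner_mat k g) = (- 1) ^ j * det (mat_delete (corner_mat k g) 0 j)"
  using assms by (subst det_single_entry_col [of _ "Suc k" 0 j]) (auto simp: corner_mat_def Suc_le_eq less_Suc_eq_le)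

lemma det_corner_mat_id:
  assumes "\<And>s. 1 \<le> s \<Longrightarrow> s \<le> k \<Longrightarrow> g s = s"
  shows "det (corner_mat k g) = (- 1) ^ k"
proof -
  have "mat_delete (corner_mat k g) 0 0 = (- 1) \<cdot>\<^sub>m 1\<^sub>m k"
    by (rule eq_matI) (auto simp: mat_delete_def corner_mat_def assms)
  then show ?thesis using assms by (simp add: det_corner_mat_delete [of 0])
qed

lemma det_corner_mat_pred:
  assumes "\<And>s. 1 \<le> s \<Longrightarrow> s \<le> k \<Longrightarrow> g s = s - 1"
  shows "det (corner_mat k g) = 1"
proof -
  have "mat_delete (corner_mat k g) 0 k = (- 1) \<cdot>\<^sub>m 1\<^sub>m k"
    by (rule eq_matI) (auto simp: mat_delete_def corner_mat_def assms)
  then show ?thesis using assms by (simp add: det_corner_mat_delete [of k] flip: power_add)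
qed

lemma det_corner_mat_rev:
  assumes "\<And>s. 1 \<le> s \<Longrightarrow> s \<le> k \<Longrightarrow> g s = k + 1 - s"
  shows "det (corner_mat k g) = (- 1) ^ k * (- 1) ^ (k choose 2)"
proof -
  have "mat_delete (corner_mat k g) 0 0
      = (- 1) \<cdot>\<^sub>m mat k k (\<lambda>(i, j). if Suc (i + j) = k then 1 else 0)"
    by (rule eq_matI) (auto simp: mat_delete_def corner_mat_def assms)
  then show ?thesis using assms by (simp add: det_corner_mat_delete [of 0] det_exchange_mat)
qed

lemma det_corner_mat_rev_pred:
  assumes "\<And>s. 1 \<le> s \<Longrightarrow> s \<le> k \<Longrightarrow> g s = k - s"
  shows "det (corner_mat k g) = (- 1) ^ (k choose 2)"
proof -
  have "mat_delete (corner_mat k g) 0 k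
      = (- 1) \<cdot>\<^sub>m mat k k (\<lambda>(i, j). if Suc (i + j) = k then 1 else 0)"
    by (rule eq_matI) (auto simp: mat_delete_def corner_mat_def assms)
  moreover have "(- 1 :: int) ^ k * (- 1) ^ k = 1"
    by (simp flip: power_mult_distrib)
  ultimately show ?thesis
    using assms by (simp add: det_corner_mat_delete [of k] det_exchange_mat mult.assoc [symmetric])
qed

lemma det_corner_mat_repeat:
  assumes "1 \<le> s" "s < s'" "s' \<le> k" "g s = g s'"
  shows "det (corner_mat k g) = 0"
proof (rule det_identical_rows [of _ "Suc k"])
  show "row (corner_mat k g) s = row (corner_mat k g) s'"
    by (rule eq_vecI) (use assms in \<open>auto simp: corner_mat_def\<close>)
qed (use assms in \<open>auto simp: corner_mat_def\<close>)

lemma det_reduced_mat_eq_corner: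
  assumes n: "n = a + Suc k"
  shows "det (reduced_mat k n) = (- 1) ^ (a * (k + 2)) * det (corner_mat k (\<lambda>s. fold_index k (a + s)))"
proof -
  let ?C = "corner_mat k (\<lambda>s. fold_index k (a + s))"
  have M: "reduced_mat k n \<in> carrier_mat n n" by (simp add: reduced_mat_def)
  \<comment> \<open>rows \<open>1, \<dots>, a\<close> have their entry \<open>1\<close> in columns \<open>k + 1, \<dots>, k + a\<close>; moving these rows and
    columns to the front leaves an identity block above the corner\<close>
  define B where "B = mat n n (\<lambda>(i, j). reduced_mat k n $$ (if i < a then i + 1 else if i < 1 + a then i - a else i, j))"
  have dB: "det (reduced_mat k n) = (- 1) ^ (1 * a) * det B"
    unfolding B_def by (rule det_swap_initial_rows [OF M]) (use n in simp)
  have B: "B \<in> carrier_mat (a + Suc k) (a + Suc k)" using n by (simp add: B_def)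
  define C where "C = mat (a + Suc k) (a + Suc k) (\<lambda>(i, j). B $$ (i, if j < a then j + Suc k else j - a))"
  have dC: "det B = (- 1) ^ (a * Suc k) * det C"
    unfolding C_def by (rule det_swap_cols [OF B])
  define D where "D = mat a (Suc k) (\<lambda>(i, j). C $$ (i, j + a))"
  have blocks: "C = four_block_mat (1\<^sub>m a) D (0\<^sub>m (Suc k) a) ?C"
  proof (rule eq_matI)
    fix i j assume "i < dim_row (four_block_mat (1\<^sub>m a) D (0\<^sub>m (Suc k) a) ?C)"
      "j < dim_col (four_block_mat (1\<^sub>m a) D (0\<^sub>m (Suc k) a) ?C)"
    then have "i < a + Suc k" "j < a + Suc k" by (auto simp: D_def corner_mat_def)
    then show "C $$ (i, j) = four_block_mat (1\<^sub>m a) D (0\<^sub>m (Suc k) a) ?C $$ (i, j)"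
      using n fold_index_le [of k "Suc i"] fold_index_le [of k i] fold_index_le [of k "a + (i - a)"]
      by (auto simp: C_def B_def reduced_mat_def D_def corner_mat_def)
  qed (auto simp: C_def D_def corner_mat_def)
  have "det C = det (1\<^sub>m a) * det ?C"
    unfolding blocks by (rule det_four_block_mat_lower_left_zero) (auto simp: D_def corner_mat_def)
  moreover have "(- 1 :: int) ^ a * (- 1) ^ (a * Suc k) = (- 1) ^ (a * (k + 2))"
    by (simp flip: power_add add: algebra_simps)
  ultimately show ?thesis using dB dC by simp
qed

definition corner_value :: "nat \<Rightarrow> nat \<Rightarrow> int" where
  "corner_value k r =
     (if r = 0 then (- 1) ^ k * (- 1) ^ (k choose 2)
      else if r = 1 then (- 1) ^ (k choose 2)
      else if r = k + 1 then 1
      else if r = k + 2 then (- 1) ^ k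
      else 0)"

lemma fold_index_add:
  assumes "1 \<le> s"
  shows "fold_index k (a + s)
    = (let t = (a mod (2 * k + 2) + (s - 1)) mod (2 * k + 2) in if t \<le> k then k - t else t - k - 1)"
proof -
  have "a + s - 1 = a + (s - 1)" using assms by simp
  then show ?thesis unfolding fold_index_def by (simp add: mod_add_left_eq)
qed

lemma det_corner_mat_fold_index:
  "det (corner_mat k (\<lambda>s. fold_index k (a + s))) = corner_value k (a mod (2 * k + 2))"
proof -
  define r where "r = a mod (2 * k + 2)"
  have r: "r < 2 * k + 2" unfolding r_def by simp
  have g: "fold_index k (a + s)
      = (let t = (r + (s - 1)) mod (2 * k + 2) in if t \<le> k then k - t else t - k - 1)"
    if "1 \<le> s" for s
    using fold_index_add [OF that] unfolding r_def .
  consider "r = 0" | "r = 1" "k \<ge> 1" | "2 \<le> r" "r \<le> k" | "r = k + 1" | "r = k + 2" | "k + 3 \<le> r"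
    using r by linarith
  then have "det (corner_mat k (\<lambda>s. fold_index k (a + s))) = corner_value k r"
  proof cases
    case 1
    then show ?thesis
      by (subst det_corner_mat_rev) (auto simp: g Let_def corner_value_def)
  next
    case 2
    then show ?thesis
      by (subst det_corner_mat_rev_pred) (auto simp: g Let_def corner_value_def)
  next
    case 3
    have "fold_index k (a + (k - r + 1)) = 0" "fold_index k (a + (k - r + 2)) = 0"
      using 3 g [of "k - r + 1"] g [of "k - r + 2"] by (simp_all add: Let_def)
    with 3 show ?thesis
      by (subst det_corner_mat_repeat [of "k - r + 1" "k - r + 2"]) (auto simp: corner_value_def)
  next
    case 4
    then show ?thesis
      by (subst det_corner_mat_pred) (auto simp: g Let_def corner_value_def numeral_2_eq_2)
  next
    case 5
    then show ?thesis
      by (subst det_corner_mat_id) (auto simp: g Let_def corner_value_def)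
  next
    case 6
    have "fold_index k (a + (2 * k + 2 - r)) = k" "fold_index k (a + (2 * k + 3 - r)) = k"
      using 6 r g [of "2 * k + 2 - r"] g [of "2 * k + 3 - r"] by (simp_all add: Let_def)
    with 6 r show ?thesis
      by (subst det_corner_mat_repeat [of "2 * k + 2 - r" "2 * k + 3 - r"]) (auto simp: corner_value_def)
  qed
  then show ?thesis unfolding r_def .
qed

lemma det_reduced_mat_small:
  assumes "1 \<le> n" "n \<le> k"
  shows "det (reduced_mat k n) = (if n = 1 then 1 else 0)"
proof (cases "n = 1")
  case True
  have "det (reduced_mat k 1) = reduced_mat k 1 $$ (0, 0) * det (mat_delete (reduced_mat k 1) 0 0)"
    by (subst det_single_entry_col [of _ 1 0 0]) (auto simp: reduced_mat_def)
  also have "\<dots> = 1" by (simp add: reduced_mat_def mat_delete_def det_dim_zero)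
  finally show ?thesis using True by simp
next
  case False
  with assms have n: "2 \<le> n" by simp
  have "fold_index k 1 = k" by (simp add: fold_index_def)
  \<comment> \<open>row \<open>1\<close> vanishes: its entries would sit in columns \<open>k + 1\<close> and \<open>k\<close>\<close>
  then have "det (reduced_mat k n) = (\<Sum>j<n. reduced_mat k n $$ (1, j) * cofactor (reduced_mat k n) 1 j)"
    using n by (intro laplace_expansion_row) (auto simp: reduced_mat_def)
  also have "\<dots> = 0"
    using n assms \<open>fold_index k 1 = k\<close> by (intro sum.neutral) (auto simp: reduced_mat_def)
  finally show ?thesis using False by simp
qed

definition hankel_det_value :: "nat \<Rightarrow> nat \<Rightarrow> int" where
  "hankel_det_value k n =
     (if n mod (k + 1) = 0 then (- 1) ^ ((n div (k + 1)) * ((k + 1) choose 2))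
      else if n mod (k + 1) = 1 then (- 1) ^ ((n div (k + 1)) * ((k + 1) choose 2))
      else 0)"

lemma hankel_det_value_mult_add:
  assumes "t < k + 1"
  shows "hankel_det_value k ((k + 1) * m + t) = (if t \<le> 1 then (- 1) ^ (m * ((k + 1) choose 2)) else 0)"
proof -
  have "(d * m + t) mod d = t \<and> (d * m + t) div d = m" if "t < d" for d
    using that by simp
  then have "((k + 1) * m + t) mod (k + 1) = t" "((k + 1) * m + t) div (k + 1) = m"
    using assms by blast+
  with assms show ?thesis unfolding hankel_det_value_def by auto
qed

lemma hankel_det_value_eq_corner_value:
  "hankel_det_value k (a + Suc k) = (- 1) ^ (a * (k + 2)) * corner_value k (a mod (2 * k + 2))"
proof -
  define q where "q = a div (2 * k + 2)"
  define r where "r = a mod (2 * k + 2)"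
  have a: "a = (2 * k + 2) * q + r" unfolding q_def r_def by (metis div_mult_mod_eq mult.commute)
  have r: "r < 2 * k + 2" unfolding r_def by simp
  have choose: "Suc k choose 2 = k + (k choose 2)" by (simp add: numeral_2_eq_2)
  consider "r = 0" | "r = 1" "k \<ge> 1" | "2 \<le> r" "r \<le> k" | "r = k + 1" | "r = k + 2" | "k + 3 \<le> r"
    using r by linarith
  then have "hankel_det_value k (a + Suc k) = (- 1) ^ (a * (k + 2)) * corner_value k r"
  proof cases
    case 1
    then have n: "a + Suc k = (k + 1) * (2 * q + 1) + 0" and p: "even a"
      using a by (simp_all add: algebra_simps)
    show ?thesis
      by (subst n, subst hankel_det_value_mult_add)
        (use 1 p in \<open>simp_all add: corner_value_def choose minus_one_power_iff even_add\<close>)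
  next
    case 2
    then have n: "a + Suc k = (k + 1) * (2 * q + 1) + 1" and p: "odd a"
      using a by (simp_all add: algebra_simps)
    show ?thesis
      by (subst n, subst hankel_det_value_mult_add)
        (use 2 p in \<open>simp_all add: corner_value_def choose minus_one_power_iff even_add\<close>)
  next
    case 3
    then have n: "a + Suc k = (k + 1) * (2 * q + 1) + r" using a by (simp add: algebra_simps)
    show ?thesis
      by (subst n, subst hankel_det_value_mult_add)
        (use 3 in \<open>simp_all add: corner_value_def\<close>)
  next
    case 4
    then have n: "a + Suc k = (k + 1) * (2 * q + 2) + 0" using a by (simp add: algebra_simps)
    have p: "(- 1 :: int) ^ (a * (k + 2)) = 1" "(- 1 :: int) ^ ((2 * q + 2) * m) = 1" for m
      using a 4 by (simp_all add: minus_one_power_iff even_add)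
    have "(- 1 :: int) ^ (0 choose 2) = 1" by (simp add: numeral_2_eq_2)
    then show ?thesis
      by (subst n, subst hankel_det_value_mult_add) (use 4 p in \<open>simp_all add: corner_value_def\<close>)
  next
    case 5
    then have n: "a + Suc k = (k + 1) * (2 * q + 2) + 1" and p: "even (a * (k + 2)) \<longleftrightarrow> even k"
      using a by (simp_all add: algebra_simps even_add)
    show ?thesis
      by (subst n, subst hankel_det_value_mult_add)
        (use 5 p r in \<open>simp_all add: corner_value_def minus_one_power_iff\<close>)
  next
    case 6
    then have n: "a + Suc k = (k + 1) * (2 * q + 2) + (r - (k + 1))" using a by (simp add: algebra_simps)
    show ?thesis
      by (subst n, subst hankel_det_value_mult_add)
        (use 6 r in \<open>simp_all add: corner_value_def\<close>)
  qed
  then show ?thesis unfolding r_def .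
qed

theorem corollary13:
  fixes n k :: nat
  assumes "n \<ge> 1"
  shows "det (mat n n (\<lambda>(i, j). \<Sum>l = 0..k.
            binom_int (i + j) ((int i + int j + 1 - int k) div 2 + int l)))
         = (if n mod (k + 1) = 0 then (-1) ^ ((n div (k + 1)) * ((k + 1) choose 2))
            else if n mod (k + 1) = 1 then (-1) ^ ((n div (k + 1)) * ((k + 1) choose 2))
            else (0::int))"
proof -
  have "det (reduced_mat k n) = hankel_det_value k n"
  proof (cases "n \<le> k")
    case True
    then have "n mod (k + 1) = n" "n div (k + 1) = 0" by simp_all
    with assms True show ?thesis by (simp add: det_reduced_mat_small hankel_det_value_def)
  next
    case False
    define a where "a = n - Suc k"
    with False have n: "n = a + Suc k" by simp
    have "det (reduced_mat k n) = (- 1) ^ (a * (k + 2)) * corner_value k (a mod (2 * k + 2))"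
      by (simp only: det_reduced_mat_eq_corner [OF n] det_corner_mat_fold_index)
    also have "\<dots> = hankel_det_value k n"
      unfolding n by (rule hankel_det_value_eq_corner_value [symmetric])
    finally show ?thesis .
  qed
  then show ?thesis unfolding det_hankel_eq_det_reduced_mat hankel_det_value_def .
qed

end
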